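(* Let $d,r,k$ be positive integers and $\nu>0$. Let $M_\sharp=X_\sharp X_\sharp^\top$ with $X_\sharp\in\mathbb{R}^{d\times r}$ of rank $r$, $\|X_\sharp\|_{\mathrm{op}}\le1$ and $\|X_\sharp\|_{2,\infty}\le\sqrt{\nu r/d}$; let $S_\sharp\in\mathbb{R}^{d\times d}$ be symmetric with at most $k$ nonzero entries per column; and let $W=M_\sharp+S_\sharp$. Let $\mathcal{X}=\{X\in\mathbb{R}^{d\times r}:\|X\|_{2,\infty}\le\sqrt{\nu r/d}\}$ and $\mathcal{S}=\{S\in\mathbb{R}^{d\times d}\text{ symmetric}:\|Se_i\|_1\le\|S_\sharp e_i\|_1\ \forall i\}$. Define $F((X,S))=\|XX^\top+S-W\|_F$ and $F_Y((X,S))=\|YY^\top+Y(X-Y)^\top+(X-Y)Y^\top+S-W\|_F$. Then for all $X,Y\in\mathcal{X}$, $S\in\mathcal{S}$: $$F((X,S))^2\ge\Big(\tfrac12\sigma_r^2(X_\sharp)-10\sqrt{\tfrac{\nu rk}{d}}\Big)\Big(\mathrm{dist}(X,\mathcal{D}^*(M_\sharp))^2+\|S-S_\sharp\|_F^2\Big),$$ $$|F((X,S))-F_Y((X,S))|\le\|X-Y\|_F^2,$$ and for all $X_1,X_2\in\mathcal{X}$, $S_1,S_2\in\mathcal{S}$, $$|F((X_1,S_1))-F((X_2,S_2))|\le2\sqrt{\nu r}\|X_1-X_2\|_F+\|S_1-S_2\|_F.$$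
   Context: $\|X\|_{2,\infty}$ is the maximum Euclidean row norm; $\|\cdot\|_{\mathrm{op}}$ the spectral norm; $\sigma_r$ the $r$-th largest singular value; $e_i$ the $i$-th standard basis vector. $\mathcal{D}^*(M_\sharp)=\{X_\sharp R:R\in O(r)\}$ and $\mathrm{dist}$ is Frobenius distance. *)

theory Defs
  imports "HOL-Analysis.Analysis"
begin

text \<open>Matrices in R^{m x n} are rendered as real^'n^'m (rows indexed by 'm).
  The Frobenius norm is the library norm on real^'n^'m.\<close>

definition norm_2inf :: "real^'n^'m \<Rightarrow> real" where
  "norm_2inf X = Max (range (\<lambda>i. norm (X $ i)))"

definition op_norm :: "real^'n^'m \<Rightarrow> real" where
  "op_norm X = onorm (\<lambda>x. X *v x)"

definition col_l1 :: "real^'n^'m \<Rightarrow> 'n \<Rightarrow> real" where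
  "col_l1 S i = (\<Sum>j\<in>UNIV. \<bar>S $ j $ i\<bar>)"

text \<open>sigma_r(X) for X in R^{d x r} (r = number of columns): the r-th largest
  singular value, i.e. the smallest of the r singular values, i.e. the square
  root of the smallest eigenvalue of the r x r matrix X^T X.\<close>
definition sigma_r :: "real^'r^'d \<Rightarrow> real" where
  "sigma_r X = sqrt (Min {c. \<exists>v. v \<noteq> 0 \<and> (transpose X ** X) *v v = c *s v})"

text \<open>Frobenius distance from X to D*(M) = {X0 R : R in O(r)}.\<close>
definition dist_Dstar :: "real^'r^'d \<Rightarrow> real^'r^'d \<Rightarrow> real" where
  "dist_Dstar X X0 = Inf ((\<lambda>R. norm (X - X0 ** R)) ` {R :: real^'r^'r. orthogonal_matrix R})"

end

theory Submission
  imports Defs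
begin

text \<open>Choose \<open>U = X\<^sub>\<sharp> R\<close> with \<open>R\<close> orthogonal attaining \<open>dist(X, D\<^sup>*(M\<^sub>\<sharp>))\<close>, and put
  \<open>\<Delta> = X - U\<close>, \<open>D = S - S\<^sub>\<sharp>\<close>. The residual is \<open>A + D\<close> with \<open>A = X X\<^sup>T - U U\<^sup>T\<close>.
  Optimality of \<open>R\<close> makes \<open>U\<^sup>T X\<close> symmetric positive semidefinite, which yields
  \<open>|A|\<^sup>2 \<ge> 2/3 |\<Delta> U\<^sup>T|\<^sup>2 \<ge> 2/3 \<sigma>\<^sub>r\<^sup>2 |\<Delta>|\<^sup>2\<close>. The constraint \<open>|S e\<^sub>i|\<^sub>1 \<le> |S\<^sub>\<sharp> e\<^sub>i|\<^sub>1\<close> with \<open>k\<close>-sparse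
  columns of \<open>S\<^sub>\<sharp>\<close> forces \<open>|D e\<^sub>i|\<^sub>1 \<le> 2 \<surd>k |D e\<^sub>i|\<^sub>2\<close>; combined with the row bound on \<open>X\<close> and \<open>U\<close>
  this bounds the cross term \<open>|A \<bullet> D|\<close> by \<open>4 \<surd>(\<nu> r k / d) |\<Delta>| |D|\<close>, and the lower bound
  follows, even with \<open>4\<close> in place of \<open>10\<close>. The other two estimates are the triangle inequality
  and submultiplicativity of the Frobenius norm.\<close>

lemma matrix_add_rdistrib: "((A::real^'k^'m) + B) ** (C::real^'n^'k) = A ** C + B ** C"
  by (vector matrix_matrix_mult_def sum.distrib[symmetric] field_simps)

lemma matrix_diff_rdistrib: "((A::real^'k^'m) - B) ** (C::real^'n^'k) = A ** C - B ** C"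
  by (vector matrix_matrix_mult_def sum_subtractf[symmetric] field_simps)

lemma matrix_diff_ldistrib: "(A::real^'k^'m) ** ((B::real^'n^'k) - C) = A ** B - A ** C"
  by (vector matrix_matrix_mult_def sum_subtractf[symmetric] field_simps)

lemma transpose_add: "transpose ((A::real^'n^'m) + B) = transpose A + transpose B"
  by (vector transpose_def)

lemma transpose_diff: "transpose ((A::real^'n^'m) - B) = transpose A - transpose B"
  by (vector transpose_def)

lemma matrix_matrix_mult_row: "((A::real^'k^'m) ** (B::real^'n^'k)) $ i = A $ i v* B"
  by (simp add: vec_eq_iff matrix_matrix_mult_def vector_matrix_mult_def)

lemma matrix_mult_transpose_component:
  "((A::real^'k^'m) ** transpose (B::real^'k^'n)) $ i $ j = A $ i \<bullet> B $ j"
  by (simp add: matrix_matrix_mult_def transpose_def inner_vec_def)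

lemma symmetric_matrix_component: "transpose (A::real^'n^'n) = A \<Longrightarrow> A $ i $ j = A $ j $ i"
  by (metis transpose_def vec_lambda_beta)

lemma inner_matrix_def: "(A::real^'n^'m) \<bullet> B = (\<Sum>i\<in>UNIV. \<Sum>j\<in>UNIV. A$i$j * B$i$j)"
  by (simp add: inner_vec_def)

lemma inner_transpose: "transpose (A::real^'n^'m) \<bullet> transpose B = A \<bullet> B"
  unfolding inner_matrix_def by (simp add: transpose_def) (rule sum.swap)

lemma norm_transpose: "norm (transpose (A::real^'n^'m)) = norm A"
  by (simp add: norm_eq_sqrt_inner inner_transpose)

lemma inner_matrix_mult_transpose_right:
  "((A::real^'k^'m) ** (B::real^'n^'k)) \<bullet> C = A \<bullet> (C ** transpose B)"
  unfolding inner_matrix_def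
  by (simp add: matrix_matrix_mult_def transpose_def sum_distrib_left sum_distrib_right mult_ac)
     (rule sum.cong[OF refl], rule sum.swap)

lemma inner_matrix_mult_transpose_left:
  "((A::real^'k^'m) ** (B::real^'n^'k)) \<bullet> C = B \<bullet> (transpose A ** C)"
proof -
  have "(A ** B) \<bullet> C = (transpose B ** transpose A) \<bullet> transpose C"
    by (simp flip: matrix_transpose_mul add: inner_transpose)
  also have "\<dots> = transpose B \<bullet> transpose (transpose A ** C)"
    by (simp add: inner_matrix_mult_transpose_right matrix_transpose_mul)
  finally show ?thesis by (simp add: inner_transpose)
qed

lemma power2_norm_matrix_rows: "(norm (A::real^'n^'m))\<^sup>2 = (\<Sum>i\<in>UNIV. (norm (A$i))\<^sup>2)"
  by (simp add: power2_norm_eq_inner inner_vec_def)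

lemma norm_matrix_vector_mult_le: "norm ((M::real^'n^'m) *v x) \<le> norm M * norm x"
proof -
  have "(norm (M *v x))\<^sup>2 = (\<Sum>j\<in>UNIV. (M$j \<bullet> x)\<^sup>2)"
    unfolding power2_norm_eq_inner
    by (simp add: inner_vec_def matrix_vector_mul_component power2_eq_square)
  also have "\<dots> \<le> (\<Sum>j\<in>UNIV. (norm (M$j))\<^sup>2 * (norm x)\<^sup>2)"
    by (rule sum_mono) (use Cauchy_Schwarz_ineq in \<open>simp add: power2_norm_eq_inner\<close>)
  also have "\<dots> = (norm M * norm x)\<^sup>2"
    by (simp add: power2_norm_matrix_rows power_mult_distrib sum_distrib_right)
  finally show ?thesis by (rule power2_le_imp_le) simp
qed

lemma norm_matrix_mult_le: "norm ((A::real^'k^'m) ** (B::real^'n^'k)) \<le> norm A * norm B"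
proof -
  have "(norm (A ** B))\<^sup>2 = (\<Sum>i\<in>UNIV. (norm (transpose B *v A$i))\<^sup>2)"
    by (simp add: power2_norm_matrix_rows matrix_matrix_mult_row)
  also have "\<dots> \<le> (\<Sum>i\<in>UNIV. (norm B * norm (A$i))\<^sup>2)"
    using norm_matrix_vector_mult_le[of "transpose B", unfolded norm_transpose]
    by (intro sum_mono power_mono) simp_all
  also have "\<dots> = (norm A * norm B)\<^sup>2"
    by (simp add: power2_norm_matrix_rows power_mult_distrib sum_distrib_left mult_ac)
  finally show ?thesis by (rule power2_le_imp_le) simp
qed

lemma norm_orthogonal_matrix_vector:
  assumes "orthogonal_matrix (R::real^'n^'n)"
  shows "norm (R *v x) = norm x"
proof -
  have "(R *v x) \<bullet> (R *v x) = x \<bullet> x"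
    using assms dot_lmul_matrix[of x "transpose R" "R *v x"]
    by (simp add: matrix_vector_mul_assoc orthogonal_matrix)
  thus ?thesis by (simp add: norm_eq_sqrt_inner)
qed

lemma norm_row_le_norm_2inf: "norm ((X::real^'n^'m) $ i) \<le> norm_2inf X"
  unfolding norm_2inf_def by (rule Max_ge) auto

lemma norm_le_norm_2inf: "norm (X::real^'n^'m) \<le> sqrt CARD('m) * norm_2inf X"
proof -
  have nonneg: "0 \<le> norm_2inf X"
    by (rule order_trans[OF norm_ge_zero norm_row_le_norm_2inf])
  have "(norm X)\<^sup>2 \<le> (\<Sum>i\<in>(UNIV::'m set). (norm_2inf X)\<^sup>2)"
    unfolding power2_norm_matrix_rows
    by (intro sum_mono power_mono norm_row_le_norm_2inf norm_ge_zero)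
  also have "\<dots> = (sqrt CARD('m) * norm_2inf X)\<^sup>2"
    by (simp only: sum_constant power_mult_distrib real_sqrt_pow2 of_nat_0_le_iff
        card_UNIV_def[symmetric] of_nat_mult mult.commute)
  finally show ?thesis
    by (rule power2_le_imp_le) (simp add: nonneg)
qed

section \<open>The smallest singular value\<close>

definition gram_eigenvalues :: "real^'n^'m \<Rightarrow> real set" where
  "gram_eigenvalues A = {c. \<exists>v. v \<noteq> 0 \<and> (transpose A ** A) *v v = c *s v}"

lemma sigma_r_gram_eigenvalues: "sigma_r A = sqrt (Min (gram_eigenvalues A))"
  unfolding sigma_r_def gram_eigenvalues_def ..

lemma inner_gram_matrix: "x \<bullet> ((transpose A ** A) *v y) = (A *v x) \<bullet> ((A::real^'n^'m) *v y)"
  by (metis dot_lmul_matrix inner_commute matrix_vector_mul_assoc transpose_matrix_vector)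

lemma gram_eigenvalue_nonneg:
  assumes "c \<in> gram_eigenvalues A"
  shows "0 \<le> c"
proof -
  obtain v where v: "v \<noteq> 0" "(transpose A ** A) *v v = c *s v"
    using assms unfolding gram_eigenvalues_def by blast
  have "c * (v \<bullet> v) = (norm (A *v v))\<^sup>2"
    using inner_gram_matrix[of v A v] v(2) by (simp add: scalar_mult_eq_scaleR power2_norm_eq_inner)
  hence "0 \<le> c * (v \<bullet> v)" by simp
  moreover have "0 < v \<bullet> v" using v(1) by simp
  ultimately show ?thesis by (simp add: zero_le_mult_iff)
qed

text \<open>Eigenvectors of the symmetric matrix \<open>A\<^sup>T A\<close> for distinct eigenvalues are orthogonal,
  hence linearly independent, so there are at most \<open>CARD('n)\<close> eigenvalues.\<close>
lemma finite_gram_eigenvalues: "finite (gram_eigenvalues (A::real^'n^'m))"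
proof -
  define E where "E = gram_eigenvalues A"
  define f where "f c = (SOME v. v \<noteq> 0 \<and> (transpose A ** A) *v v = c *\<^sub>R v)" for c
  have f: "f c \<noteq> 0 \<and> (transpose A ** A) *v f c = c *\<^sub>R f c" if "c \<in> E" for c
    using that unfolding E_def gram_eigenvalues_def f_def scalar_mult_eq_scaleR
    by (metis (mono_tags, lifting) someI_ex mem_Collect_eq)
  have orth: "f c \<bullet> f c' = 0" if "c \<in> E" "c' \<in> E" "c \<noteq> c'" for c c'
  proof -
    have "c * (f c' \<bullet> f c) = (A *v f c') \<bullet> (A *v f c)"
      using f[OF that(1)] inner_gram_matrix[of "f c'" A "f c"] by simp
    also have "\<dots> = c' * (f c \<bullet> f c')"
      using f[OF that(2)] inner_gram_matrix[of "f c" A "f c'"] by (simp add: inner_commute)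
    finally have "(c - c') * (f c \<bullet> f c') = 0" by (simp add: inner_commute algebra_simps)
    thus ?thesis using that(3) by simp
  qed
  have "inj_on f E"
    by (rule inj_onI) (metis orth f inner_eq_zero_iff)
  moreover have "independent (f ` E)"
    by (rule pairwise_orthogonal_independent) (use orth f in \<open>auto simp: pairwise_def orthogonal_def\<close>)
  hence "finite (f ` E)" by (rule finiteI_independent)
  ultimately show ?thesis unfolding E_def using finite_imageD by blast
qed

lemma nonneg_quadratic_linear_coeff_zero:
  fixes c s :: real
  assumes "\<And>t. 0 \<le> t * c + t\<^sup>2 * s" "0 \<le> s"
  shows "c = 0"
proof -
  define t where "t = - c / (s + 1)"
  have pos: "s + 1 > 0" using assms(2) by simp
  have "0 \<le> t * c + t\<^sup>2 * s" by (rule assms(1))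
  also have "\<dots> = - c\<^sup>2 / (s + 1)\<^sup>2"
    using pos by (simp add: t_def divide_simps power2_eq_square) (simp add: algebra_simps)
  finally have "c\<^sup>2 \<le> 0" using pos by (simp add: divide_le_0_iff)
  thus ?thesis by simp
qed

lemma exists_rayleigh_minimizer:
  fixes A :: "real^'n^'m"
  obtains w where "norm w = 1" "\<And>x. (norm (A *v w))\<^sup>2 * (norm x)\<^sup>2 \<le> (norm (A *v x))\<^sup>2"
proof -
  have cont: "continuous_on (sphere 0 1) (\<lambda>x. (norm (A *v x))\<^sup>2)"
    by (intro continuous_intros linear_continuous_on matrix_vector_mul_bounded_linear)
  have "axis undefined 1 \<in> sphere (0::real^'n) 1" by simp
  then obtain w where w: "w \<in> sphere 0 1"
    and min: "\<And>y. y \<in> sphere 0 1 \<Longrightarrow> (norm (A *v w))\<^sup>2 \<le> (norm (A *v y))\<^sup>2"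
    using continuous_attains_inf[OF compact_sphere _ cont] by blast
  have "(norm (A *v w))\<^sup>2 * (norm x)\<^sup>2 \<le> (norm (A *v x))\<^sup>2" for x
  proof (cases "x = 0")
    case False
    have "(norm (A *v w))\<^sup>2 \<le> (norm (A *v ((1 / norm x) *\<^sub>R x)))\<^sup>2"
      using False by (intro min) simp
    also have "\<dots> = (norm (A *v x))\<^sup>2 / (norm x)\<^sup>2"
      by (simp add: matrix_vector_mult_scaleR power_divide)
    finally show ?thesis using False by (simp add: field_simps)
  qed simp
  thus ?thesis using that w by simp
qed

text \<open>A minimiser \<open>w\<close> of the Rayleigh quotient is an eigenvector: perturbing it along the
  residual \<open>y = A\<^sup>T A w - m w\<close> changes \<open>|A x|\<^sup>2 - m |x|\<^sup>2\<close> by \<open>2t|y|\<^sup>2 + O(t\<^sup>2)\<close>,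
  which must be nonnegative for all \<open>t\<close>.\<close>
lemma rayleigh_minimizer_eigenvector:
  fixes A :: "real^'n^'m"
  assumes w: "norm w = 1"
    and min: "\<And>x. (norm (A *v w))\<^sup>2 * (norm x)\<^sup>2 \<le> (norm (A *v x))\<^sup>2"
  shows "(transpose A ** A) *v w = (norm (A *v w))\<^sup>2 *s w"
proof -
  define m where "m = (norm (A *v w))\<^sup>2"
  define y where "y = (transpose A ** A) *v w - m *\<^sub>R w"
  define Q where "Q = (norm (A *v y))\<^sup>2 - m * (norm y)\<^sup>2"
  have ww: "w \<bullet> w = 1" using w by (simp add: norm_eq_1)
  have gram: "(A *v w) \<bullet> (A *v y) = y \<bullet> y + m * (w \<bullet> y)"
    using inner_gram_matrix[of y A w]
    by (simp add: y_def inner_diff_left inner_diff_right inner_commute algebra_simps)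
  have expand: "(norm (A *v (w + t *\<^sub>R y)))\<^sup>2 - m * (norm (w + t *\<^sub>R y))\<^sup>2
      = t * (2 * (y \<bullet> y)) + t\<^sup>2 * Q" for t
  proof -
    have "(norm (A *v (w + t *\<^sub>R y)))\<^sup>2
        = m + 2 * t * ((A *v w) \<bullet> (A *v y)) + t\<^sup>2 * (norm (A *v y))\<^sup>2"
      unfolding m_def power2_norm_eq_inner
      by (simp add: matrix_vector_right_distrib matrix_vector_mult_scaleR inner_add_left
          inner_add_right inner_commute power2_eq_square algebra_simps)
    moreover have "(norm (w + t *\<^sub>R y))\<^sup>2 = 1 + 2 * t * (w \<bullet> y) + t\<^sup>2 * (norm y)\<^sup>2"
      using ww unfolding power2_norm_eq_inner
      by (simp add: inner_add_left inner_add_right inner_commute power2_eq_square algebra_simps)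
    ultimately show ?thesis unfolding gram Q_def by (simp add: algebra_simps)
  qed
  have "2 * (y \<bullet> y) = 0"
  proof (rule nonneg_quadratic_linear_coeff_zero)
    show "0 \<le> t * (2 * (y \<bullet> y)) + t\<^sup>2 * Q" for t
      using min[of "w + t *\<^sub>R y"] expand[of t] by (simp add: m_def)
    show "0 \<le> Q" using min[of y] by (simp add: Q_def m_def)
  qed
  thus ?thesis by (simp add: y_def m_def scalar_mult_eq_scaleR)
qed

lemma exists_rayleigh_minimizer_eigenvalue:
  fixes A :: "real^'n^'m"
  obtains w where "norm w = 1" "(norm (A *v w))\<^sup>2 \<in> gram_eigenvalues A"
    "\<And>x. (norm (A *v w))\<^sup>2 * (norm x)\<^sup>2 \<le> (norm (A *v x))\<^sup>2"
proof -
  obtain w where w: "norm w = 1" and min: "\<And>x. (norm (A *v w))\<^sup>2 * (norm x)\<^sup>2 \<le> (norm (A *v x))\<^sup>2"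
    by (rule exists_rayleigh_minimizer[of A]) (rule that)
  have "w \<noteq> 0" using w by auto
  hence "(norm (A *v w))\<^sup>2 \<in> gram_eigenvalues A"
    using rayleigh_minimizer_eigenvector[OF w min] unfolding gram_eigenvalues_def by blast
  thus ?thesis by (rule that[OF w _ min])
qed

lemma sigma_r_nonneg: "0 \<le> sigma_r A"
proof -
  obtain w where "(norm (A *v w))\<^sup>2 \<in> gram_eigenvalues A"
    by (rule exists_rayleigh_minimizer_eigenvalue[of A])
  hence "Min (gram_eigenvalues A) \<in> gram_eigenvalues A"
    using finite_gram_eigenvalues by (intro Min_in) auto
  thus ?thesis unfolding sigma_r_gram_eigenvalues by (simp add: gram_eigenvalue_nonneg)
qed

lemma sigma_r_rayleigh_bound:
  fixes A :: "real^'r^'d"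
  obtains w where "norm w = 1" "(sigma_r A)\<^sup>2 \<le> (norm (A *v w))\<^sup>2"
    "\<And>x. (norm (A *v w))\<^sup>2 * (norm x)\<^sup>2 \<le> (norm (A *v x))\<^sup>2"
proof -
  obtain w where w: "norm w = 1" and eig: "(norm (A *v w))\<^sup>2 \<in> gram_eigenvalues A"
    and min: "\<And>x. (norm (A *v w))\<^sup>2 * (norm x)\<^sup>2 \<le> (norm (A *v x))\<^sup>2"
    by (rule exists_rayleigh_minimizer_eigenvalue[of A]) (rule that)
  have "(sigma_r A)\<^sup>2 = Min (gram_eigenvalues A)"
    using sigma_r_nonneg[of A] unfolding sigma_r_gram_eigenvalues
    by (metis real_sqrt_ge_0_iff real_sqrt_pow2)
  also have "\<dots> \<le> (norm (A *v w))\<^sup>2"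
    using finite_gram_eigenvalues eig by (rule Min_le)
  finally show ?thesis by (rule that[OF w _ min])
qed

lemma sigma_r_norm_mult_ge: "(sigma_r A)\<^sup>2 * (norm x)\<^sup>2 \<le> (norm (A *v x))\<^sup>2"
proof -
  obtain w where "(sigma_r A)\<^sup>2 \<le> (norm (A *v w))\<^sup>2"
    and "(norm (A *v w))\<^sup>2 * (norm x)\<^sup>2 \<le> (norm (A *v x))\<^sup>2"
    by (rule sigma_r_rayleigh_bound[of A]) (rule that)
  thus ?thesis by (meson mult_right_mono order_trans zero_le_power2)
qed

lemma sigma_r_le_op_norm: "sigma_r A \<le> op_norm A"
proof -
  obtain w where w: "norm w = 1" and sigma: "(sigma_r A)\<^sup>2 \<le> (norm (A *v w))\<^sup>2"
    by (rule sigma_r_rayleigh_bound[of A]) (rule that)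
  have "norm (A *v w) \<le> op_norm A"
    using onorm[OF matrix_vector_mul_bounded_linear, of A w] w by (simp add: op_norm_def)
  hence "(norm (A *v w))\<^sup>2 \<le> (op_norm A)\<^sup>2"
    by (rule power_mono) simp
  moreover have "0 \<le> op_norm A"
    unfolding op_norm_def by (rule onorm_pos_le[OF matrix_vector_mul_bounded_linear])
  ultimately show ?thesis
    using sigma by (metis order_trans real_le_rsqrt real_sqrt_abs abs_of_nonneg)
qed

lemma sigma_r_norm_mult_transpose_ge:
  fixes A :: "real^'r^'d" and \<Delta> :: "real^'r^'n"
  assumes "orthogonal_matrix R"
  shows "(sigma_r A)\<^sup>2 * (norm \<Delta>)\<^sup>2 \<le> (norm (\<Delta> ** transpose (A ** R)))\<^sup>2"
proof -
  have "(sigma_r A)\<^sup>2 * (norm \<Delta>)\<^sup>2 = (\<Sum>i\<in>UNIV. (sigma_r A)\<^sup>2 * (norm (R *v \<Delta>$i))\<^sup>2)"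
    by (simp add: power2_norm_matrix_rows sum_distrib_left norm_orthogonal_matrix_vector[OF assms])
  also have "\<dots> \<le> (\<Sum>i\<in>UNIV. (norm (A *v (R *v \<Delta>$i)))\<^sup>2)"
    by (intro sum_mono sigma_r_norm_mult_ge)
  also have "\<dots> = (norm (\<Delta> ** transpose (A ** R)))\<^sup>2"
    by (simp add: power2_norm_matrix_rows matrix_matrix_mult_row matrix_vector_mul_assoc)
  finally show ?thesis .
qed

section \<open>Orthogonal Procrustes alignment\<close>

definition outer :: "real^'m \<Rightarrow> real^'n \<Rightarrow> real^'n^'m" where
  "outer a b = (\<chi> i j. a$i * b$j)"

lemma transpose_outer: "transpose (outer a b) = outer b a"
  by (vector outer_def transpose_def)

lemma outer_mult_outer: "outer a b ** outer c e = (b \<bullet> c) *\<^sub>R outer a e"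
  by (simp add: vec_eq_iff outer_def matrix_matrix_mult_def inner_vec_def sum_distrib_left
      sum_distrib_right mult_ac)

lemma inner_outer: "(M::real^'n^'m) \<bullet> outer a b = a \<bullet> (M *v b)"
  by (simp add: inner_vec_def outer_def matrix_vector_mult_def sum_distrib_left mult_ac)

lemma inner_axis_matrix_axis: "axis i 1 \<bullet> ((B::real^'n^'n) *v axis j 1) = B$i$j"
  by (simp add: inner_axis' matrix_vector_mul_component inner_axis)

definition householder :: "real^'n \<Rightarrow> real^'n^'n" where
  "householder v = mat 1 - (2 / (v \<bullet> v)) *\<^sub>R outer v v"

lemma householder_mult_householder:
  "householder v ** householder u =
     mat 1 - (2 / (v \<bullet> v)) *\<^sub>R outer v v - (2 / (u \<bullet> u)) *\<^sub>R outer u u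
     + ((2 / (v \<bullet> v)) * (2 / (u \<bullet> u)) * (v \<bullet> u)) *\<^sub>R outer v u"
  unfolding householder_def
  by (simp add: matrix_diff_ldistrib matrix_diff_rdistrib matrix_scalar_ac
      flip: scalar_matrix_assoc)
     (simp add: outer_mult_outer algebra_simps)

lemma orthogonal_householder:
  assumes "v \<noteq> 0"
  shows "orthogonal_matrix (householder v)"
proof -
  have "transpose (householder v) = householder v"
    by (simp add: householder_def transpose_diff transpose_scalar transpose_outer)
  moreover have "householder v ** householder v = mat 1"
  proof -
    define c where "c = 2 / (v \<bullet> v)"
    have "c + c - c * c * (v \<bullet> v) = 0"
      using assms by (simp add: c_def field_simps)
    moreover have "householder v ** householder v
        = mat 1 - (c + c - c * c * (v \<bullet> v)) *\<^sub>R outer v v"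
      unfolding householder_mult_householder c_def[symmetric] scaleR_diff_left scaleR_add_left
      by (simp add: algebra_simps)
    ultimately show ?thesis by simp
  qed
  ultimately show ?thesis by (simp add: orthogonal_matrix)
qed

text \<open>\<open>B \<bullet> \<Omega>\<close> is the trace of \<open>B\<^sup>T \<Omega>\<close>. If it is maximised over the orthogonal group at
  \<open>\<Omega> = I\<close>, testing against reflections shows that \<open>B\<close> is positive semidefinite, and testing
  against products of two reflections (rotations in a coordinate plane) shows that \<open>B\<close> is
  symmetric.\<close>
lemma trace_maximizer_psd:
  fixes B :: "real^'n^'n"
  assumes max: "\<And>\<Omega>. orthogonal_matrix \<Omega> \<Longrightarrow> B \<bullet> \<Omega> \<le> B \<bullet> mat 1"
  shows "0 \<le> v \<bullet> (B *v v)"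
proof (cases "v = 0")
  case False
  have "B \<bullet> householder v \<le> B \<bullet> mat 1"
    using max orthogonal_householder[OF False] by blast
  hence "0 \<le> 2 * (v \<bullet> (B *v v)) / (v \<bullet> v)"
    by (simp add: householder_def inner_diff_right inner_outer)
  moreover have "0 < v \<bullet> v" using False by simp
  ultimately show ?thesis by (simp add: zero_le_divide_iff)
qed simp

lemma trace_maximizer_plane_rotation:
  fixes B :: "real^'n^'n"
  assumes max: "\<And>\<Omega>. orthogonal_matrix \<Omega> \<Longrightarrow> B \<bullet> \<Omega> \<le> B \<bullet> mat 1" and "i \<noteq> j"
  shows "0 \<le> t * (B$i$j - B$j$i) + t\<^sup>2 * (B$i$i + B$j$j)"
proof -
  define u :: "real^'n" where "u = axis i 1"
  define v :: "real^'n" where "v = axis i 1 + t *\<^sub>R axis j 1"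
  define a where "a = 2 / (1 + t\<^sup>2)"
  have "v $ i = 1" using assms(2) by (simp add: v_def axis_def)
  hence "u \<noteq> 0" "v \<noteq> 0" by (auto simp: u_def)
  hence "B \<bullet> (householder v ** householder u) \<le> B \<bullet> mat 1"
    using max orthogonal_matrix_mul orthogonal_householder by blast
  hence le: "0 \<le> (2 / (v \<bullet> v)) * (v \<bullet> (B *v v)) + (2 / (u \<bullet> u)) * (u \<bullet> (B *v u))
      - ((2 / (v \<bullet> v)) * (2 / (u \<bullet> u)) * (v \<bullet> u)) * (v \<bullet> (B *v u))"
    unfolding householder_mult_householder by (simp add: inner_diff_right inner_add_right inner_outer)
  have ij: "axis i 1 \<bullet> axis j (1::real) = 0" "axis j 1 \<bullet> axis i (1::real) = 0"
    using assms(2) by (simp_all add: inner_axis_axis)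
  have "u \<bullet> u = 1" "u \<bullet> (B *v u) = B$i$i" "v \<bullet> v = 1 + t\<^sup>2" "v \<bullet> u = 1"
    using ij by (simp_all add: u_def v_def inner_axis_matrix_axis inner_add_left inner_add_right
        power2_eq_square)
  moreover have "v \<bullet> (B *v u) = B$i$i + t * B$j$i"
    "v \<bullet> (B *v v) = B$i$i + t * B$i$j + t * B$j$i + t\<^sup>2 * B$j$j"
    by (simp_all add: v_def u_def matrix_vector_right_distrib matrix_vector_mult_scaleR
        inner_add_left inner_add_right inner_axis_matrix_axis power2_eq_square algebra_simps)
  ultimately have "0 \<le> a * (B$i$i + t * B$i$j + t * B$j$i + t\<^sup>2 * B$j$j) + 2 * B$i$i
      - a * 2 * (B$i$i + t * B$j$i)"
    using le by (simp add: a_def)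
  also have "\<dots> = a * (t * (B$i$j - B$j$i) + t\<^sup>2 * (B$i$i + B$j$j))
      + (2 - a * (1 + t\<^sup>2)) * B$i$i"
    by (simp add: algebra_simps)
  also have "a * (1 + t\<^sup>2) = 2"
    unfolding a_def using add_pos_nonneg[of 1 "t\<^sup>2"] by (simp add: divide_simps)
  finally have "0 \<le> a * (t * (B$i$j - B$j$i) + t\<^sup>2 * (B$i$i + B$j$j))" by simp
  moreover have "0 < a" unfolding a_def by (simp add: add_pos_nonneg)
  ultimately show ?thesis by (meson zero_le_mult_iff not_less)
qed

lemma trace_maximizer_symmetric:
  fixes B :: "real^'n^'n"
  assumes max: "\<And>\<Omega>. orthogonal_matrix \<Omega> \<Longrightarrow> B \<bullet> \<Omega> \<le> B \<bullet> mat 1"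
  shows "transpose B = B"
proof -
  have "B$i$j = B$j$i" if "i \<noteq> j" for i j
  proof (rule nonneg_quadratic_linear_coeff_zero[THEN eq_iff_diff_eq_0[THEN iffD2]])
    show "0 \<le> B$i$i + B$j$j"
      using trace_maximizer_psd[OF max, of "axis i 1"] trace_maximizer_psd[OF max, of "axis j 1"]
      by (simp add: inner_axis_matrix_axis)
  qed (rule trace_maximizer_plane_rotation[OF max that])
  hence "B$i$j = B$j$i" for i j by (cases "i = j") auto
  thus ?thesis by (simp add: vec_eq_iff transpose_def)
qed

lemma compact_orthogonal_matrices: "compact {R::real^'n^'n. orthogonal_matrix R}"
proof -
  have "{R::real^'n^'n. orthogonal_matrix R} = {R. (\<chi> i j. \<Sum>k\<in>UNIV. R$k$i * R$k$j) = mat 1}"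
    by (simp add: orthogonal_matrix matrix_matrix_mult_def transpose_def)
  moreover have "closed {R::real^'n^'n. (\<chi> i j. \<Sum>k\<in>UNIV. R$k$i * R$k$j) = mat 1}"
    by (rule closed_Collect_eq) (intro continuous_intros)+
  moreover have "norm R = sqrt CARD('n)" if "orthogonal_matrix R" for R :: "real^'n^'n"
  proof -
    have "norm (R$i) = 1" for i
      using that unfolding orthogonal_matrix_orthonormal_rows row_def by simp
    hence "(norm R)\<^sup>2 = CARD('n)" by (simp add: power2_norm_matrix_rows)
    thus ?thesis by (simp add: real_sqrt_unique)
  qed
  hence "bounded {R::real^'n^'n. orthogonal_matrix R}"
    unfolding bounded_iff by (metis mem_Collect_eq order_refl)
  ultimately show ?thesis by (simp add: compact_eq_bounded_closed)
qed

lemma dist_Dstar_attained: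
  fixes X Xs :: "real^'r^'d"
  obtains R0 where "orthogonal_matrix R0" "dist_Dstar X Xs = norm (X - Xs ** R0)"
    "\<And>R. orthogonal_matrix R \<Longrightarrow> norm (X - Xs ** R0) \<le> norm (X - Xs ** R)"
proof -
  let ?O = "{R::real^'r^'r. orthogonal_matrix R}"
  have "continuous_on ?O (\<lambda>R. norm (X - (\<chi> i j. \<Sum>k\<in>UNIV. Xs$i$k * R$k$j)))"
    by (intro continuous_intros)
  then obtain R0 where R0: "R0 \<in> ?O" and min: "\<And>R. R \<in> ?O \<Longrightarrow> norm (X - Xs ** R0) \<le> norm (X - Xs ** R)"
    using continuous_attains_inf[OF compact_orthogonal_matrices _, of "\<lambda>R. norm (X - Xs ** R)"]
      orthogonal_matrix_id unfolding matrix_matrix_mult_def by blast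
  have "dist_Dstar X Xs = norm (X - Xs ** R0)"
    unfolding dist_Dstar_def by (rule cInf_eq_minimum) (use R0 min in auto)
  with R0 min show ?thesis using that by blast
qed

lemma procrustes_cross_gram:
  fixes X U :: "real^'r^'d"
  assumes min: "\<And>\<Omega>. orthogonal_matrix \<Omega> \<Longrightarrow> norm (X - U) \<le> norm (X - U ** \<Omega>)"
  shows "transpose (transpose U ** X) = transpose U ** X"
    and "0 \<le> v \<bullet> ((transpose U ** X) *v v)"
proof -
  define B where "B = transpose U ** X"
  have "B \<bullet> \<Omega> \<le> B \<bullet> mat 1" if \<Omega>: "orthogonal_matrix \<Omega>" for \<Omega>
  proof -
    have "(X - U) \<bullet> (X - U) \<le> (X - U ** \<Omega>) \<bullet> (X - U ** \<Omega>)"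
      using min[OF \<Omega>] by (simp add: norm_eq_sqrt_inner)
    moreover have "(U ** \<Omega>) \<bullet> (U ** \<Omega>) = U \<bullet> U"
      using \<Omega> by (simp add: inner_matrix_mult_transpose_right matrix_transpose_mul
          flip: matrix_mul_assoc add: orthogonal_matrix_def)
    moreover have cross: "X \<bullet> (U ** R) = B \<bullet> R" for R
      using inner_matrix_mult_transpose_left[of U R X] by (simp add: B_def inner_commute)
    ultimately show ?thesis
      using cross[of "mat 1"] by (simp add: inner_diff_left inner_diff_right inner_commute)
  qed
  thus "transpose B = B" "0 \<le> v \<bullet> (B *v v)"
    by (simp_all add: trace_maximizer_symmetric trace_maximizer_psd)
qed

section \<open>Perturbation of the Gram map\<close>

lemma inner_gram_nonneg_of_psd:
  fixes B :: "real^'r^'r" and \<Delta> :: "real^'r^'d"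
  assumes "\<And>v. 0 \<le> v \<bullet> (B *v v)"
  shows "0 \<le> B \<bullet> (transpose \<Delta> ** \<Delta>)"
proof -
  have "B \<bullet> (transpose \<Delta> ** \<Delta>) = (\<Sum>i\<in>UNIV. \<Delta>$i \<bullet> (B *v \<Delta>$i))"
    using inner_matrix_mult_transpose_left[of "transpose \<Delta>" \<Delta> B]
    by (simp add: inner_commute inner_vec_def[of \<Delta>] matrix_matrix_mult_row)
       (metis (no_types) inner_commute dot_lmul_matrix)
  thus ?thesis using assms by (simp add: sum_nonneg)
qed

lemma power2_norm_mult_transpose:
  "(norm ((U::real^'r^'d) ** transpose (\<Delta>::real^'r^'n)))\<^sup>2
    = (transpose U ** U) \<bullet> (transpose \<Delta> ** \<Delta>)"
proof -
  have "(norm (U ** transpose \<Delta>))\<^sup>2 = U \<bullet> (U ** (transpose \<Delta> ** \<Delta>))"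
    by (simp add: power2_norm_eq_inner inner_matrix_mult_transpose_right matrix_mul_assoc)
  also have "\<dots> = (transpose \<Delta> ** \<Delta>) \<bullet> (transpose U ** U)"
    using inner_matrix_mult_transpose_left[of U "transpose \<Delta> ** \<Delta>" U] by (simp add: inner_commute)
  finally show ?thesis by (simp add: inner_commute)
qed

lemma norm_gram_perturbation_eq:
  fixes U \<Delta> :: "real^'r^'d"
  defines "G \<equiv> transpose U ** U" and "P \<equiv> transpose U ** \<Delta>" and "Q \<equiv> transpose \<Delta> ** \<Delta>"
  assumes P_sym: "transpose P = P"
  shows "(norm (U ** transpose \<Delta> + \<Delta> ** transpose U + \<Delta> ** transpose \<Delta>))\<^sup>2
    = 2 * (G \<bullet> Q) + Q \<bullet> Q + 2 * (P \<bullet> P) + 4 * (P \<bullet> Q)"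
proof -
  define M1 where "M1 = U ** transpose \<Delta>"
  define M2 where "M2 = \<Delta> ** transpose U"
  define M3 where "M3 = \<Delta> ** transpose \<Delta>"
  have M2: "M2 = transpose M1" and M3: "transpose M3 = M3"
    by (simp_all add: M1_def M2_def M3_def matrix_transpose_mul)
  have PT: "transpose \<Delta> ** U = P"
    using P_sym by (simp add: P_def matrix_transpose_mul)
  have "M1 \<bullet> M1 = G \<bullet> Q"
    using power2_norm_mult_transpose[of U \<Delta>] by (simp add: M1_def G_def Q_def power2_norm_eq_inner)
  moreover have "M1 \<bullet> M2 = P \<bullet> P"
  proof -
    have "M1 \<bullet> M2 = U \<bullet> (\<Delta> ** P)"
      by (simp add: M1_def M2_def P_def inner_matrix_mult_transpose_right matrix_mul_assoc)
    also have "\<dots> = P \<bullet> P"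
      using inner_matrix_mult_transpose_left[of \<Delta> P U] by (simp add: PT inner_commute)
    finally show ?thesis .
  qed
  moreover have "M1 \<bullet> M3 = P \<bullet> Q"
  proof -
    have "M1 \<bullet> M3 = U \<bullet> (\<Delta> ** Q)"
      by (simp add: M1_def M3_def Q_def inner_matrix_mult_transpose_right matrix_mul_assoc)
    also have "\<dots> = Q \<bullet> P"
      using inner_matrix_mult_transpose_left[of \<Delta> Q U] by (simp add: PT inner_commute)
    finally show ?thesis by (simp add: inner_commute)
  qed
  moreover have "M3 \<bullet> M3 = Q \<bullet> Q"
  proof -
    have "M3 \<bullet> M3 = \<Delta> \<bullet> (\<Delta> ** Q)"
      by (simp add: M3_def Q_def inner_matrix_mult_transpose_right matrix_mul_assoc)
    also have "\<dots> = Q \<bullet> Q"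
      using inner_matrix_mult_transpose_left[of \<Delta> Q \<Delta>] by (simp add: Q_def inner_commute)
    finally show ?thesis .
  qed
  moreover have "M2 \<bullet> M2 = M1 \<bullet> M1" "M2 \<bullet> M3 = M1 \<bullet> M3"
    using inner_transpose[of M1 M3] by (simp_all add: M2 M3 inner_transpose)
  ultimately show ?thesis
    unfolding M1_def[symmetric] M2_def[symmetric] M3_def[symmetric] power2_norm_eq_inner
    by (simp add: inner_add_left inner_add_right inner_commute[of M2 M1] inner_commute[of M3 M1]
        inner_commute[of M3 M2])
qed

text \<open>In the expansion of \<open>norm_gram_perturbation_eq\<close> the cross term \<open>4 P \<bullet> Q\<close> is controlled
  by \<open>P \<bullet> Q \<ge> - G \<bullet> Q\<close> (from \<open>U\<^sup>T X \<succeq> 0\<close>) together with \<open>|Q + 4/3 P|\<^sup>2 \<ge> 0\<close>.\<close>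
lemma norm_gram_diff_ge:
  fixes U X :: "real^'r^'d"
  assumes sym: "transpose (transpose U ** X) = transpose U ** X"
    and psd: "\<And>v. 0 \<le> v \<bullet> ((transpose U ** X) *v v)"
  shows "(2/3) * (norm ((X - U) ** transpose U))\<^sup>2 \<le> (norm (X ** transpose X - U ** transpose U))\<^sup>2"
proof -
  define \<Delta> where "\<Delta> = X - U"
  define G where "G = transpose U ** U"
  define P where "P = transpose U ** \<Delta>"
  define Q where "Q = transpose \<Delta> ** \<Delta>"
  have X: "X = U + \<Delta>" by (simp add: \<Delta>_def)
  have B: "transpose U ** X = G + P"
    by (simp add: X G_def P_def matrix_add_ldistrib)
  have "transpose P = P"
    using sym unfolding B by (simp add: transpose_add G_def matrix_transpose_mul)
  hence "(norm (X ** transpose X - U ** transpose U))\<^sup>2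
      = 2 * (G \<bullet> Q) + Q \<bullet> Q + 2 * (P \<bullet> P) + 4 * (P \<bullet> Q)"
    using norm_gram_perturbation_eq[of U \<Delta>]
    by (simp add: X G_def P_def Q_def transpose_add matrix_add_ldistrib matrix_add_rdistrib
        algebra_simps)
  moreover have "(norm (\<Delta> ** transpose U))\<^sup>2 = G \<bullet> Q"
    using power2_norm_mult_transpose[of U \<Delta>] by (simp add: G_def Q_def norm_transpose
        flip: norm_transpose[of "\<Delta> ** transpose U"] add: matrix_transpose_mul)
  moreover have "0 \<le> G \<bullet> Q + P \<bullet> Q"
    using inner_gram_nonneg_of_psd[OF psd, of \<Delta>] by (simp add: B Q_def inner_add_left)
  moreover have "0 \<le> Q \<bullet> Q + (8/3) * (P \<bullet> Q) + (16/9) * (P \<bullet> P)"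
    using inner_ge_zero[of "Q + (4/3) *\<^sub>R P"]
    by (simp add: inner_add_left inner_add_right inner_commute[of Q P] algebra_simps)
  moreover have "0 \<le> P \<bullet> P" by simp
  ultimately show ?thesis unfolding \<Delta>_def[symmetric] by linarith
qed

section \<open>Sparse corrections\<close>

lemma sum_abs_le_sqrt_card_mult_l2:
  fixes d :: "'a \<Rightarrow> real"
  shows "(\<Sum>j\<in>T. \<bar>d j\<bar>) \<le> sqrt (card T) * sqrt (\<Sum>j\<in>T. (d j)\<^sup>2)"
proof -
  have "(\<Sum>j\<in>T. \<bar>d j\<bar> * 1)\<^sup>2 \<le> (\<Sum>j\<in>T. \<bar>d j\<bar>\<^sup>2) * (\<Sum>j\<in>T. 1\<^sup>2)"
    by (rule Cauchy_Schwarz_ineq_sum)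
  hence "(\<Sum>j\<in>T. \<bar>d j\<bar>)\<^sup>2 \<le> card T * (\<Sum>j\<in>T. (d j)\<^sup>2)" by (simp add: mult.commute)
  hence "(\<Sum>j\<in>T. \<bar>d j\<bar>) \<le> sqrt (card T * (\<Sum>j\<in>T. (d j)\<^sup>2))" by (rule real_le_rsqrt)
  thus ?thesis by (simp add: real_sqrt_mult)
qed

text \<open>If \<open>|s|\<^sub>1 \<le> |t|\<^sub>1\<close> and \<open>t\<close> is supported on \<open>T\<close>, the mass of \<open>s - t\<close> off \<open>T\<close> is at most its
  mass on \<open>T\<close>; Cauchy-Schwarz on \<open>T\<close> then bounds the \<open>\<ell>\<^sub>1\<close> norm by the \<open>\<ell>\<^sub>2\<close> norm.\<close>
lemma l1_diff_le_sparse: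
  fixes s t :: "'a::finite \<Rightarrow> real"
  assumes le: "(\<Sum>j\<in>UNIV. \<bar>s j\<bar>) \<le> (\<Sum>j\<in>UNIV. \<bar>t j\<bar>)" and sparse: "card {j. t j \<noteq> 0} \<le> k"
  shows "(\<Sum>j\<in>UNIV. \<bar>s j - t j\<bar>) \<le> 2 * sqrt k * sqrt (\<Sum>j\<in>UNIV. (s j - t j)\<^sup>2)"
proof -
  define T where "T = {j. t j \<noteq> 0}"
  have split: "(\<Sum>j\<in>UNIV. f j) = (\<Sum>j\<in>T. f j) + (\<Sum>j\<in>- T. f j)" for f :: "'a \<Rightarrow> real"
    using sum.Int_Diff[of UNIV f T] by (simp add: Compl_eq_Diff_UNIV)
  have off: "t j = 0" if "j \<in> - T" for j using that by (simp add: T_def)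
  have "(\<Sum>j\<in>T. \<bar>t j\<bar>) \<le> (\<Sum>j\<in>T. \<bar>s j\<bar>) + (\<Sum>j\<in>T. \<bar>s j - t j\<bar>)"
    unfolding sum.distrib[symmetric] by (rule sum_mono) linarith
  moreover have "(\<Sum>j\<in>T. \<bar>s j\<bar>) + (\<Sum>j\<in>- T. \<bar>s j\<bar>) \<le> (\<Sum>j\<in>T. \<bar>t j\<bar>)"
    using le split[of "\<lambda>j. \<bar>s j\<bar>"] split[of "\<lambda>j. \<bar>t j\<bar>"] by (simp add: off)
  ultimately have "(\<Sum>j\<in>UNIV. \<bar>s j - t j\<bar>) \<le> 2 * (\<Sum>j\<in>T. \<bar>s j - t j\<bar>)"
    using split[of "\<lambda>j. \<bar>s j - t j\<bar>"] by (simp add: off)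
  also have "(\<Sum>j\<in>T. \<bar>s j - t j\<bar>) \<le> sqrt (card T) * sqrt (\<Sum>j\<in>T. (s j - t j)\<^sup>2)"
    by (rule sum_abs_le_sqrt_card_mult_l2)
  also have "\<dots> \<le> sqrt k * sqrt (\<Sum>j\<in>UNIV. (s j - t j)\<^sup>2)"
    using sparse by (intro mult_mono) (simp_all add: T_def sum_mono2 sum_nonneg)
  finally show ?thesis by simp
qed

lemma col_l1_diff_le_sparse:
  fixes S Ss :: "real^'n^'n"
  assumes "transpose S = S" "transpose Ss = Ss"
    and "col_l1 S j \<le> col_l1 Ss j" "card {i. Ss$i$j \<noteq> 0} \<le> k"
  shows "col_l1 (S - Ss) j \<le> 2 * sqrt k * norm ((S - Ss) $ j)"
proof -
  have "col_l1 (S - Ss) j \<le> 2 * sqrt k * sqrt (\<Sum>i\<in>UNIV. (S$i$j - Ss$i$j)\<^sup>2)"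
    using l1_diff_le_sparse[of "\<lambda>i. S$i$j" "\<lambda>i. Ss$i$j"] assms(3,4) by (simp add: col_l1_def)
  also have "(\<Sum>i\<in>UNIV. (S$i$j - Ss$i$j)\<^sup>2) = (\<Sum>i\<in>UNIV. (S$j$i - Ss$j$i)\<^sup>2)"
    using symmetric_matrix_component[OF assms(1)] symmetric_matrix_component[OF assms(2)] by simp
  also have "sqrt \<dots> = norm ((S - Ss) $ j)"
    by (simp add: norm_eq_sqrt_inner inner_vec_def power2_eq_square)
  finally show ?thesis .
qed

lemma abs_inner_mult_transpose_le:
  fixes X \<Delta> :: "real^'r^'d" and D :: "real^'d^'d"
  assumes "\<And>i. norm (X$i) \<le> a"
  shows "\<bar>(X ** transpose \<Delta>) \<bullet> D\<bar> \<le> a * (\<Sum>j\<in>UNIV. norm (\<Delta>$j) * col_l1 D j)"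
proof -
  have "\<bar>(X ** transpose \<Delta>) \<bullet> D\<bar> = \<bar>\<Sum>i\<in>UNIV. \<Sum>j\<in>UNIV. (X$i \<bullet> \<Delta>$j) * D$i$j\<bar>"
    by (simp add: inner_matrix_def matrix_mult_transpose_component)
  also have "\<dots> \<le> (\<Sum>i\<in>UNIV. \<Sum>j\<in>UNIV. a * norm (\<Delta>$j) * \<bar>D$i$j\<bar>)"
  proof (rule order_trans[OF sum_abs sum_mono], rule order_trans[OF sum_abs sum_mono])
    fix i j
    have "\<bar>X$i \<bullet> \<Delta>$j\<bar> \<le> norm (X$i) * norm (\<Delta>$j)" by (rule Cauchy_Schwarz_ineq2)
    also have "\<dots> \<le> a * norm (\<Delta>$j)" by (rule mult_right_mono[OF assms]) simp
    finally show "\<bar>(X$i \<bullet> \<Delta>$j) * D$i$j\<bar> \<le> a * norm (\<Delta>$j) * \<bar>D$i$j\<bar>"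
      by (simp add: abs_mult mult_right_mono)
  qed
  also have "\<dots> = a * (\<Sum>j\<in>UNIV. norm (\<Delta>$j) * col_l1 D j)"
    by (subst sum.swap) (simp add: col_l1_def sum_distrib_left mult_ac)
  finally show ?thesis .
qed

lemma sum_norm_row_mult_col_l1_le:
  fixes \<Delta> :: "real^'r^'d" and D :: "real^'d^'d"
  assumes "\<And>j. col_l1 D j \<le> c * norm (D$j)" "0 \<le> c"
  shows "(\<Sum>j\<in>UNIV. norm (\<Delta>$j) * col_l1 D j) \<le> c * (norm \<Delta> * norm D)"
proof -
  have "(\<Sum>j\<in>UNIV. norm (\<Delta>$j) * col_l1 D j) \<le> c * (\<Sum>j\<in>UNIV. norm (\<Delta>$j) * norm (D$j))"
    unfolding sum_distrib_left
    by (rule sum_mono) (metis assms(1) mult.left_commute mult_left_mono norm_ge_zero)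
  also have "(\<Sum>j\<in>UNIV. norm (\<Delta>$j) * norm (D$j)) \<le> norm \<Delta> * norm D"
  proof (rule power2_le_imp_le)
    have "(\<Sum>j\<in>UNIV. norm (\<Delta>$j) * norm (D$j))\<^sup>2
        \<le> (\<Sum>j\<in>UNIV. (norm (\<Delta>$j))\<^sup>2) * (\<Sum>j\<in>UNIV. (norm (D$j))\<^sup>2)"
      by (rule Cauchy_Schwarz_ineq_sum)
    thus "(\<Sum>j\<in>UNIV. norm (\<Delta>$j) * norm (D$j))\<^sup>2 \<le> (norm \<Delta> * norm D)\<^sup>2"
      by (simp add: power2_norm_matrix_rows power_mult_distrib)
  qed simp
  hence "c * (\<Sum>j\<in>UNIV. norm (\<Delta>$j) * norm (D$j)) \<le> c * (norm \<Delta> * norm D)"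
    by (rule mult_left_mono[OF _ assms(2)])
  finally show ?thesis .
qed

section \<open>The robust PCA residual\<close>

lemma norm_linearization_error:
  fixes X Y :: "real^'r^'d" and S W :: "real^'d^'d"
  shows "\<bar>norm (X ** transpose X + S - W)
      - norm (Y ** transpose Y + Y ** transpose (X - Y) + (X - Y) ** transpose Y + S - W)\<bar>
    \<le> (norm (X - Y))\<^sup>2"
proof -
  have "(X ** transpose X + S - W)
      - (Y ** transpose Y + Y ** transpose (X - Y) + (X - Y) ** transpose Y + S - W)
      = (X - Y) ** transpose (X - Y)"
    by (simp add: transpose_diff matrix_diff_ldistrib matrix_diff_rdistrib algebra_simps)
  hence "\<bar>norm (X ** transpose X + S - W)
      - norm (Y ** transpose Y + Y ** transpose (X - Y) + (X - Y) ** transpose Y + S - W)\<bar>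
      \<le> norm ((X - Y) ** transpose (X - Y))"
    by (metis norm_triangle_ineq3)
  also have "\<dots> \<le> (norm (X - Y))\<^sup>2"
    using norm_matrix_mult_le[of "X - Y" "transpose (X - Y)"]
    by (simp add: norm_transpose power2_eq_square)
  finally show ?thesis .
qed

lemma norm_residual_lipschitz:
  fixes X1 X2 :: "real^'r^'d" and S1 S2 W :: "real^'d^'d"
  shows "\<bar>norm (X1 ** transpose X1 + S1 - W) - norm (X2 ** transpose X2 + S2 - W)\<bar>
    \<le> (norm X1 + norm X2) * norm (X1 - X2) + norm (S1 - S2)"
proof -
  define E where "E = X1 - X2"
  have "(X1 ** transpose X1 + S1 - W) - (X2 ** transpose X2 + S2 - W)
      = X1 ** transpose E + E ** transpose X2 + (S1 - S2)"
    by (simp add: E_def transpose_diff matrix_diff_ldistrib matrix_diff_rdistrib algebra_simps)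
  hence "\<bar>norm (X1 ** transpose X1 + S1 - W) - norm (X2 ** transpose X2 + S2 - W)\<bar>
      \<le> norm (X1 ** transpose E + E ** transpose X2 + (S1 - S2))"
    by (metis norm_triangle_ineq3)
  also have "\<dots> \<le> norm (X1 ** transpose E) + norm (E ** transpose X2) + norm (S1 - S2)"
    by (intro norm_triangle_le add_right_mono norm_triangle_ineq)
  also have "\<dots> \<le> norm X1 * norm E + norm E * norm X2 + norm (S1 - S2)"
    using norm_matrix_mult_le[of X1 "transpose E"] norm_matrix_mult_le[of E "transpose X2"]
    by (simp add: norm_transpose)
  finally show ?thesis by (simp add: E_def algebra_simps)
qed

lemma abs_inner_gram_diff_le:
  fixes X U :: "real^'r^'d" and D :: "real^'d^'d"
  assumes "\<And>i. norm (X$i) \<le> a" "\<And>i. norm (U$i) \<le> a" "transpose D = D"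
    and "\<And>j. col_l1 D j \<le> c * norm (D$j)" "0 \<le> c"
  shows "\<bar>(X ** transpose X - U ** transpose U) \<bullet> D\<bar> \<le> 2 * a * c * (norm (X - U) * norm D)"
proof -
  define \<Delta> where "\<Delta> = X - U"
  have "(\<Delta> ** transpose U) \<bullet> D = (U ** transpose \<Delta>) \<bullet> D"
    using inner_transpose[of "\<Delta> ** transpose U" D] assms(3) by (simp add: matrix_transpose_mul)
  hence "(X ** transpose X - U ** transpose U) \<bullet> D
      = (X ** transpose \<Delta>) \<bullet> D + (U ** transpose \<Delta>) \<bullet> D"
    by (simp add: \<Delta>_def transpose_diff matrix_diff_ldistrib matrix_diff_rdistrib inner_diff_left
        inner_add_left algebra_simps)
  also have "\<bar>\<dots>\<bar> \<le> 2 * a * (\<Sum>j\<in>UNIV. norm (\<Delta>$j) * col_l1 D j)"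
    using abs_inner_mult_transpose_le[of X a \<Delta> D, OF assms(1)]
      abs_inner_mult_transpose_le[of U a \<Delta> D, OF assms(2)]
    by linarith
  also have "\<dots> \<le> 2 * a * (c * (norm \<Delta> * norm D))"
    using sum_norm_row_mult_col_l1_le[OF assms(4,5), of \<Delta>] order_trans[OF norm_ge_zero assms(1)]
    by (intro mult_left_mono) simp_all
  finally show ?thesis by (simp add: \<Delta>_def mult_ac)
qed

lemma residual_lower_bound_scalar:
  fixes l e c x y n p :: real
  assumes "0 \<le> l" "l \<le> 1" "0 \<le> e" "4 * e \<le> c"
    and gram: "(2/3) * (l * x\<^sup>2) \<le> n" and cross: "- (4 * e * (x * y)) \<le> p"
  shows "((1/2) * l - c) * (x\<^sup>2 + y\<^sup>2) \<le> n + 2 * p + y\<^sup>2"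
proof -
  have "e * (2 * (x * y)) \<le> e * (x\<^sup>2 + y\<^sup>2)"
    using assms(3) sum_squares_bound[of x y] by (intro mult_left_mono) (simp_all add: power2_eq_square)
  moreover have "0 \<le> l * x\<^sup>2" "0 \<le> l * y\<^sup>2" "l * y\<^sup>2 \<le> y\<^sup>2"
    using assms(1,2) mult_right_mono[OF assms(2), of "y\<^sup>2"] by simp_all
  moreover have "(4 * e - c) * (x\<^sup>2 + y\<^sup>2) \<le> 0"
    using assms(4) by (intro mult_nonpos_nonneg) simp_all
  ultimately show ?thesis
    using gram cross by (simp add: algebra_simps)
qed

lemma norm_residual_lower_bound:
  fixes Xs X :: "real^'r^'d" and Ss S :: "real^'d^'d"
  assumes row_X: "\<And>i. norm (X$i) \<le> a" and row_Xs: "\<And>i. norm (Xs$i) \<le> a"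
    and op_norm: "op_norm Xs \<le> 1" and sym: "transpose Ss = Ss" "transpose S = S"
    and l1: "\<And>j. col_l1 S j \<le> col_l1 Ss j" and sparse: "\<And>j. card {i. Ss$i$j \<noteq> 0} \<le> k"
    and rate: "4 * a * sqrt k \<le> c"
  shows "((1/2) * (sigma_r Xs)\<^sup>2 - c) * ((dist_Dstar X Xs)\<^sup>2 + (norm (S - Ss))\<^sup>2)
    \<le> (norm (X ** transpose X + S - (Xs ** transpose Xs + Ss)))\<^sup>2"
proof -
  obtain R0 where R0: "orthogonal_matrix R0" and dist: "dist_Dstar X Xs = norm (X - Xs ** R0)"
    and min: "\<And>R. orthogonal_matrix R \<Longrightarrow> norm (X - Xs ** R0) \<le> norm (X - Xs ** R)"
    by (rule dist_Dstar_attained[of X Xs]) (rule that)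
  define U where "U = Xs ** R0"
  define A where "A = X ** transpose X - U ** transpose U"
  define D where "D = S - Ss"
  have "norm (X - U) \<le> norm (X - U ** \<Omega>)" if "orthogonal_matrix \<Omega>" for \<Omega>
    using min[OF orthogonal_matrix_mul[OF R0 that]] by (simp add: U_def matrix_mul_assoc)
  hence "(2/3) * (norm ((X - U) ** transpose U))\<^sup>2 \<le> (norm A)\<^sup>2"
    unfolding A_def by (intro norm_gram_diff_ge procrustes_cross_gram)
  moreover have "(sigma_r Xs)\<^sup>2 * (norm (X - U))\<^sup>2 \<le> (norm ((X - U) ** transpose U))\<^sup>2"
    unfolding U_def by (rule sigma_r_norm_mult_transpose_ge[OF R0])
  ultimately have gram: "(2/3) * ((sigma_r Xs)\<^sup>2 * (norm (X - U))\<^sup>2) \<le> (norm A)\<^sup>2" by linarith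
  have "norm (U$i) \<le> a" for i
    using norm_orthogonal_matrix_vector[of "transpose R0" "Xs$i"] R0 row_Xs[of i]
    by (simp add: U_def matrix_matrix_mult_row)
  moreover have "col_l1 D j \<le> 2 * sqrt k * norm (D$j)" for j
    unfolding D_def by (rule col_l1_diff_le_sparse[OF sym(2,1) l1 sparse])
  ultimately have "\<bar>A \<bullet> D\<bar> \<le> 2 * a * (2 * sqrt k) * (norm (X - U) * norm D)"
    unfolding A_def using sym
    by (intro abs_inner_gram_diff_le row_X) (simp_all add: D_def transpose_diff)
  hence cross: "- (4 * (a * sqrt k) * (norm (X - U) * norm D)) \<le> A \<bullet> D"
    by (simp add: abs_le_iff algebra_simps)
  have "U ** transpose U = Xs ** transpose Xs"
    using R0 unfolding U_def orthogonal_matrix_def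
    by (simp add: matrix_transpose_mul matrix_mul_assoc) (metis matrix_mul_assoc matrix_mul_rid)
  hence "X ** transpose X + S - (Xs ** transpose Xs + Ss) = A + D"
    by (simp add: A_def D_def)
  hence "(norm (X ** transpose X + S - (Xs ** transpose Xs + Ss)))\<^sup>2
      = (norm A)\<^sup>2 + 2 * (A \<bullet> D) + (norm D)\<^sup>2"
    unfolding power2_norm_eq_inner by (simp add: inner_add_left inner_add_right inner_commute)
  moreover have "0 \<le> a * sqrt k"
    using order_trans[OF norm_ge_zero row_X] by simp
  moreover have "0 \<le> (sigma_r Xs)\<^sup>2" "(sigma_r Xs)\<^sup>2 \<le> 1"
    using sigma_r_nonneg[of Xs] sigma_r_le_op_norm[of Xs] op_norm by (simp_all add: power_le_one)
  ultimately show ?thesis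
    using residual_lower_bound_scalar[OF _ _ _ _ gram cross] rate
    by (simp add: dist D_def U_def mult.assoc)
qed

theorem lemma8p2:
  fixes Xs :: "real^'r^'d" and Ss :: "real^'d^'d" and \<nu> :: real and k :: nat
  assumes "k > 0" and "\<nu> > 0"
    and "rank Xs = CARD('r)"
    and "op_norm Xs \<le> 1"
    and "norm_2inf Xs \<le> sqrt (\<nu> * CARD('r) / CARD('d))"
    and "transpose Ss = Ss"
    and "\<forall>i. card {j. Ss $ j $ i \<noteq> 0} \<le> k"
  defines "W \<equiv> Xs ** transpose Xs + Ss"
  defines "Xset \<equiv> {X :: real^'r^'d. norm_2inf X \<le> sqrt (\<nu> * CARD('r) / CARD('d))}"
  defines "Sset \<equiv> {S :: real^'d^'d. transpose S = S \<and> (\<forall>i. col_l1 S i \<le> col_l1 Ss i)}"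
  defines "F \<equiv> \<lambda>(X :: real^'r^'d, S :: real^'d^'d). norm (X ** transpose X + S - W)"
  defines "FY \<equiv> \<lambda>(Y :: real^'r^'d) (X :: real^'r^'d, S :: real^'d^'d).
             norm (Y ** transpose Y + Y ** transpose (X - Y) + (X - Y) ** transpose Y + S - W)"
  shows "(\<forall>X\<in>Xset. \<forall>Y\<in>Xset. \<forall>S\<in>Sset.
            (F (X, S))\<^sup>2 \<ge> ((1/2) * (sigma_r Xs)\<^sup>2 - 10 * sqrt (\<nu> * CARD('r) * k / CARD('d)))
                          * ((dist_Dstar X Xs)\<^sup>2 + (norm (S - Ss))\<^sup>2)
          \<and> \<bar>F (X, S) - FY Y (X, S)\<bar> \<le> (norm (X - Y))\<^sup>2)
       \<and> (\<forall>X1\<in>Xset. \<forall>X2\<in>Xset. \<forall>S1\<in>Sset. \<forall>S2\<in>Sset.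
            \<bar>F (X1, S1) - F (X2, S2)\<bar> \<le> 2 * sqrt (\<nu> * CARD('r)) * norm (X1 - X2) + norm (S1 - S2))"
proof -
  define a where "a = sqrt (\<nu> * CARD('r) / CARD('d))"
  have row: "norm (X$i) \<le> a" if "X \<in> Xset \<or> X = Xs" for X i
    using that assms(5) order_trans[OF norm_row_le_norm_2inf] by (auto simp: Xset_def a_def)
  have frob: "norm X \<le> sqrt (\<nu> * CARD('r))" if "X \<in> Xset" for X
  proof -
    have "norm X \<le> sqrt CARD('d) * a"
      using that norm_le_norm_2inf[of X] by (simp add: Xset_def a_def order_trans mult_left_mono)
    also have "\<dots> = sqrt (\<nu> * CARD('r))"
      by (simp add: a_def real_sqrt_mult[symmetric])
    finally show ?thesis .
  qed
  have "4 * a * sqrt k \<le> 10 * sqrt (\<nu> * CARD('r) * k / CARD('d))"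
    using assms(2) by (simp add: a_def mult_ac flip: real_sqrt_mult)
  hence "((1/2) * (sigma_r Xs)\<^sup>2 - 10 * sqrt (\<nu> * CARD('r) * k / CARD('d)))
      * ((dist_Dstar X Xs)\<^sup>2 + (norm (S - Ss))\<^sup>2) \<le> (F (X, S))\<^sup>2"
    if "X \<in> Xset" and "S \<in> Sset" for X S
    using that assms(4,6,7) unfolding F_def W_def prod.case
    by (intro norm_residual_lower_bound) (auto simp: Sset_def intro: row)
  moreover have "\<bar>F (X, S) - FY Y (X, S)\<bar> \<le> (norm (X - Y))\<^sup>2" for X Y S
    unfolding F_def FY_def by (simp add: norm_linearization_error)
  moreover have "\<bar>F (X1, S1) - F (X2, S2)\<bar> \<le> 2 * sqrt (\<nu> * CARD('r)) * norm (X1 - X2) + norm (S1 - S2)"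
    if "X1 \<in> Xset" "X2 \<in> Xset" for X1 X2 S1 S2
    using norm_residual_lipschitz[of X1 S1 W X2 S2] frob[OF that(1)] frob[OF that(2)]
      mult_right_mono[OF add_mono[OF frob[OF that(1)] frob[OF that(2)]], of "norm (X1 - X2)"]
    by (simp add: F_def algebra_simps)
  ultimately show ?thesis by auto
qed

end
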